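(* (i) Let $p_{1}, p_{2}, r \in \mathbb N$ and $m \in \mathbb N_{0}$. Then \begin{align*} T(p_{1},p_{2},m,1,r,1) &=\sum_{i=1}^{m}\frac{(-1)^{m-i}}{r^{m-i+1}}S_{p_{1},p_{2},i}^{+,+,-} +\frac{(-1)^{m+r}}{r^{m}}\left(S_{p_{1},p_{2},1}^{+,+,-}-S_{p_{1},p_{2}+1}^{+,-}-S_{p_{2},p_{1}+1}^{+,-}\right) +\frac{(-1)^{m+r}}{r^{m}}\overline{\zeta}(p_{1}+p_{2}+1)\\ &\quad +\sum_{j=1}^{r-1}\frac{(-1)^{r+m-j}}{r^{m}}S(0,p_{1}+p_{2}+1,1,j,1) +\sum_{j=1}^{r-1}\frac{(-1)^{r+m-1-j}}{r^{m}}\big(S(p_{1},p_{2},1,j,1)+S(p_{2},p_{1},1,j,1)\big)\,. \end{align*} (ii) Let $p_{1}, m, r \in \mathbb N$, $p_{2} \in \mathbb N_{0}$ with $m \geq p_{2}+1$. Then \begin{align*} T(p_{1},-p_{2},m,1,r,1)=\frac{1}{p_{2}+1}\sum_{\ell=0}^{p_{2}} \binom{p_{2}+1}{\ell}B_{\ell}^{+}S(p_{1},m-p_{2}-1+\ell,1,r,1)\,. \end{align*} (iii) Let $m, r \in \mathbb N$, $p_{1}, p_{2} \in \mathbb N_{0}$ with $m \geq p_{1}+p_{2}+2$. Then \begin{align*} T(-p_{1},-p_{2},m,1,r,1)=\frac{1}{(p_{1}+1)(p_{2}+1)}\sum_{\ell_{1}=0}^{p_{1}} \sum_{\ell_{2}=0}^{p_{2}}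 \binom{p_{1}+1}{\ell_{1}}\binom{p_{2}+1}{\ell_{2}}B_{\ell_{1}}^{+}B_{\ell_{2}}^{+}\,S(0,m-p_{1}-p_{2}-1+\ell_{1}+\ell_{2},1,r,1)\,. \end{align*}
   Context: $H_n^{(q)}=\sum_{j=1}^n j^{-q}$ for $q\in\mathbb N$; for an integer $q\ge0$, $H_n^{(-q)}=\sum_{\ell=1}^n\ell^q$ (so $H_n^{(0)}=n$). For $q,q_1,q_2\in\mathbb Z$, $t,r\in\mathbb N$ and integer exponent $m\ge0$: $S(q,m,t,r,1):=\sum_{n=1}^\infty\frac{(-1)^{n+1}H_n^{(q)}}{n^{m}(n+r)^{t}}$ and $T(q_{1},q_{2},m,t,r,1):=\sum_{n=1}^\infty\frac{(-1)^{n+1}H_n^{(q_{1})}H_n^{(q_{2})}}{n^{m}(n+r)^{t}}$. $S_{p,q}^{+,-}:=\sum_{n\ge1}(-1)^{n-1}H_n^{(p)}/n^q$, $S_{p_1,p_2,q}^{+,+,-}:=\sum_{n\ge1}(-1)^{n-1}H_n^{(p_1)}H_n^{(p_2)}/n^q$, $\overline{\zeta}(s)=\sum_{n\ge1}(-1)^{n-1}n^{-s}$. Bernoulli numbers $B_j^{+}$: $\frac{x}{1-e^{-x}}=\sum_{j\ge0}B_j^{+}\frac{x^j}{j!}$. Empty sums are $0$. *)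

theory Defs
  imports "HOL-Analysis.Analysis" "HOL-Computational_Algebra.Formal_Power_Series"
begin

definition genH :: "int \<Rightarrow> nat \<Rightarrow> real" where
  "genH q n = (if 0 < q then (\<Sum>j=1..n. 1 / real j ^ nat q)
               else (\<Sum>l=1..n. real l ^ nat (- q)))"

text \<open>S(q,m,t,r,1)\<close>
definition S1 :: "int \<Rightarrow> nat \<Rightarrow> nat \<Rightarrow> nat \<Rightarrow> real" where
  "S1 q m t r = (\<Sum>k. let n = Suc k in
      (-1) ^ (n + 1) * genH q n / (real n ^ m * (real n + real r) ^ t))"

text \<open>T(q1,q2,m,t,r,1)\<close>
definition T1 :: "int \<Rightarrow> int \<Rightarrow> nat \<Rightarrow> nat \<Rightarrow> nat \<Rightarrow> real" where
  "T1 q1 q2 m t r = (\<Sum>k. let n = Suc k in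
      (-1) ^ (n + 1) * genH q1 n * genH q2 n / (real n ^ m * (real n + real r) ^ t))"

definition Spm :: "nat \<Rightarrow> nat \<Rightarrow> real" where
  "Spm p q = (\<Sum>k. let n = Suc k in (-1) ^ (n - 1) * genH (int p) n / real n ^ q)"

definition Sppm :: "nat \<Rightarrow> nat \<Rightarrow> nat \<Rightarrow> real" where
  "Sppm p1 p2 q = (\<Sum>k. let n = Suc k in
      (-1) ^ (n - 1) * genH (int p1) n * genH (int p2) n / real n ^ q)"

definition zeta_bar :: "nat \<Rightarrow> real" where
  "zeta_bar s = (\<Sum>k. let n = Suc k in (-1) ^ (n - 1) / real n ^ s)"

definition bernoulli_plus :: "nat \<Rightarrow> real" where
  "bernoulli_plus j = fact j * fps_nth (fps_X / (1 - fps_exp (-1)) :: real fps) j"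

end

theory Submission
  imports Defs "HOL-Real_Asymp.Real_Asymp"
begin

text \<open>
  (i) The partial fraction expansion of 1 / (n^m (n + r)) reduces T(p1,p2,m,1,r) to the sums
  S_{p1,p2,i} and to T(p1,p2,0,1,r). Shifting n to n + 1 and using H_{n-1} = H_n - n^(-p) gives
  T(p1,p2,0,1,r+1) = S(p1,p2,1,r) + S(p2,p1,1,r) - S(0,p1+p2+1,1,r) - T(p1,p2,0,1,r),
  which unrolls down to r = 0, where every series is a classical alternating Euler sum.

  (ii), (iii) Faulhaber's formula writes H_n^(-p) as a polynomial in n with coefficients
  binomial(p+1,l) B_l^+ / (p+1); its powers of n are absorbed into n^m, so T splits termwise.

  All series converge by Leibniz's test: H_n^(p) grows at most logarithmically and its relative
  increments are o(1/n), so the products occurring in the terms eventually decrease.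
\<close>

lemma genH_of_nat: "0 < p \<Longrightarrow> genH (int p) n = (\<Sum>j=1..n. 1 / real j ^ p)"
  by (simp add: genH_def)

lemma genH_zero: "genH 0 n = real n"
  by (simp add: genH_def)

lemma genH_uminus: "genH (- int p) n = (\<Sum>l=1..n. real l ^ p)"
  by (simp add: genH_def)

lemma genH_Suc: "0 < p \<Longrightarrow> genH (int p) (Suc n) = genH (int p) n + 1 / real (Suc n) ^ p"
  by (simp add: genH_of_nat)

section \<open>Faulhaber's formula with the Bernoulli numbers B^+\<close>

lemma fps_exp_minus_one:
  "fps_exp c - 1 = fps_X * Abs_fps (\<lambda>j. c ^ (j + 1) / fact (j + 1) :: real)"
proof (rule fps_ext)
  fix k show "fps_nth (fps_exp c - 1) k = fps_nth (fps_X * Abs_fps (\<lambda>j. c ^ (j + 1) / fact (j + 1))) k"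
    by (cases k) (simp_all add: algebra_simps)
qed

lemma sum_fps_exp_times_one_minus_exp:
  "(\<Sum>k=1..n. fps_exp (real k)) * (1 - fps_exp (-1)) = fps_exp (real n) - (1 :: real fps)"
proof (induction n)
  case (Suc n)
  have "fps_exp (real (Suc n)) * fps_exp (-1) = (fps_exp (real n) :: real fps)"
    by (simp flip: fps_exp_add_mult)
  with Suc show ?case by (simp add: algebra_simps)
qed simp

theorem sum_powers_bernoulli_plus:
  "(\<Sum>l=1..n. real l ^ p) = 1 / real (p + 1) *
     (\<Sum>i=0..p. real ((p + 1) choose i) * bernoulli_plus i * real n ^ (p + 1 - i))"
proof -
  define D :: "real fps" where "D = 1 - fps_exp (-1)"
  define Q :: "real fps" where "Q = Abs_fps (\<lambda>j. real n ^ (j + 1) / fact (j + 1))"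
  have "fps_nth D 1 = 1" by (simp add: D_def)
  then have "D \<noteq> 0" by auto
  moreover have "subdegree D \<le> subdegree (fps_X :: real fps)"
    using \<open>fps_nth D 1 = 1\<close> by (simp add: subdegree_leI)
  ultimately have B: "fps_X / D * D = fps_X"
    by (rule fps_times_divide_eq)
  \<comment> \<open>the exponential generating function of the power sums factors as B(x) (e^{nx} - 1) / x\<close>
  have "(\<Sum>k=1..n. fps_exp (real k)) * D = fps_X / D * Q * D"
    unfolding D_def sum_fps_exp_times_one_minus_exp fps_exp_minus_one Q_def
    using B by (simp add: D_def mult_ac)
  with \<open>D \<noteq> 0\<close> have egf: "(\<Sum>k=1..n. fps_exp (real k)) = fps_X / D * Q"
    by simp
  have "(\<Sum>l=1..n. real l ^ p) = fact p * fps_nth (\<Sum>k=1..n. fps_exp (real k)) p"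
    by (simp add: fps_sum_nth flip: sum_divide_distrib)
  also have "\<dots> = fact p * (\<Sum>i=0..p. bernoulli_plus i / fact i * fps_nth Q (p - i))"
    unfolding egf fps_mult_nth by (simp add: bernoulli_plus_def D_def)
  also have "\<dots> = (\<Sum>i=0..p. 1 / real (p + 1) *
      (real ((p + 1) choose i) * bernoulli_plus i * real n ^ (p + 1 - i)))"
    unfolding sum_distrib_left
  proof (intro sum.cong refl)
    fix i assume "i \<in> {0..p}"
    then obtain j where p: "p = i + j" by (auto dest: le_Suc_ex)
    have "real ((p + 1) choose i) = fact (i + j + 1) / (fact i * fact (j + 1))"
      by (simp add: p binomial_fact)
    then show "fact p * (bernoulli_plus i / fact i * fps_nth Q (p - i)) = 1 / real (p + 1) *
        (real ((p + 1) choose i) * bernoulli_plus i * real n ^ (p + 1 - i))"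
      by (simp add: Q_def p Suc_eq_plus1[symmetric] field_simps del: of_nat_Suc)
  qed
  finally show ?thesis by (simp add: sum_distrib_left)
qed

text \<open>The k-th term of sum_{n>=1} (-1)^(n+1) w(n) / (n^e (n + r)); every series of the theorem
  is of this form.\<close>
definition alt_term :: "(nat \<Rightarrow> real) \<Rightarrow> nat \<Rightarrow> nat \<Rightarrow> nat \<Rightarrow> real" where
  "alt_term w e r k = (-1) ^ k * w (Suc k) / (real (Suc k) ^ e * (real (Suc k) + real r))"

lemma T1_eq_suminf_alt_term: "T1 q1 q2 m 1 r = suminf (alt_term (\<lambda>n. genH q1 n * genH q2 n) m r)"
  by (simp add: T1_def alt_term_def[abs_def] mult.assoc)

lemma S1_eq_suminf_alt_term: "S1 q m 1 r = suminf (alt_term (genH q) m r)"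
  by (simp add: S1_def alt_term_def[abs_def])

lemma S1_zero_eq_suminf_alt_term: "S1 0 (Suc e) 1 r = suminf (alt_term (\<lambda>_. 1) e r)"
  unfolding S1_def alt_term_def genH_zero Let_def
  by (rule arg_cong[where f = suminf]) (simp add: fun_eq_iff divide_simps del: of_nat_Suc)

lemma Sppm_eq_suminf_alt_term:
  "Sppm p1 p2 (Suc e) = suminf (alt_term (\<lambda>n. genH (int p1) n * genH (int p2) n) e 0)"
  by (simp add: Sppm_def alt_term_def[abs_def] mult_ac)

lemma Spm_eq_suminf_alt_term: "Spm p (Suc e) = suminf (alt_term (genH (int p)) e 0)"
  by (simp add: Spm_def alt_term_def[abs_def] mult_ac)

lemma zeta_bar_eq_suminf_alt_term: "zeta_bar (Suc e) = suminf (alt_term (\<lambda>_. 1) e 0)"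
  by (simp add: zeta_bar_def alt_term_def[abs_def] mult_ac)

lemma alt_term_mult_power:
  assumes "a \<le> e"
  shows "alt_term (\<lambda>n. w n * real n ^ a) e r = alt_term w (e - a) r"
proof
  fix k
  have "real (Suc k) ^ e = real (Suc k) ^ a * real (Suc k) ^ (e - a)"
    using assms by (simp flip: power_add)
  then show "alt_term (\<lambda>n. w n * real n ^ a) e r k = alt_term w (e - a) r k"
    by (simp add: alt_term_def del: of_nat_Suc)
qed

lemma alt_term_sum:
  "alt_term (\<lambda>n. \<Sum>i\<in>I. c i * w i n) e r k = (\<Sum>i\<in>I. c i * alt_term (w i) e r k)"
  by (simp add: alt_term_def sum_distrib_left sum_divide_distrib mult_ac)

lemma inverse_power_mult_partial_fractions:
  fixes x r :: real
  assumes "x \<noteq> 0" "r \<noteq> 0" "x + r \<noteq> 0"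
  shows "1 / (x ^ m * (x + r)) =
    (\<Sum>i=1..m. (-1) ^ (m - i) / r ^ (m - i + 1) / x ^ i) + (-1) ^ m / r ^ m / (x + r)"
proof (induction m)
  case (Suc m)
  let ?P = "\<lambda>m. \<Sum>i=1..m. (-1) ^ (m - i) / r ^ (m - i + 1) / x ^ i"
  have "?P (Suc m) = (-1) ^ m / r ^ Suc m / x +
      (\<Sum>i=Suc 1..Suc m. (-1) ^ (Suc m - i) / r ^ (Suc m - i + 1) / x ^ i)"
    by (subst sum.atLeast_Suc_atMost) auto
  also have "\<dots> = (-1) ^ m / r ^ Suc m / x + ?P m / x"
    by (simp only: sum.shift_bounds_cl_Suc_ivl) (simp add: sum_divide_distrib mult_ac)
  finally have split: "?P (Suc m) = (-1) ^ m / r ^ Suc m / x + ?P m / x" .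
  have "1 / (x ^ Suc m * (x + r)) = (1 / (x ^ m * (x + r))) / x"
    by simp
  also have "\<dots> = ?P m / x + (-1) ^ m / r ^ m * (1 / (x * (x + r)))"
    unfolding Suc.IH by (simp add: add_divide_distrib)
  also have "1 / (x * (x + r)) = (1 / x - 1 / (x + r)) / r"
    using assms by (simp add: divide_simps)
  finally show ?case
    unfolding split by (simp add: algebra_simps diff_divide_distrib)
qed simp

lemma alt_term_partial_fractions:
  assumes "0 < r"
  shows "alt_term w m r k = (\<Sum>i=1..m. (-1) ^ (m - i) / real r ^ (m - i + 1) * alt_term w (i - 1) 0 k)
    + (-1) ^ m / real r ^ m * alt_term w 0 r k"
proof -
  define x where "x = real (Suc k)"
  define c where "c = (-1) ^ k * w (Suc k)"
  have x: "x \<noteq> 0" "x + real r \<noteq> 0"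
    by (simp_all add: x_def)
  have expand: "alt_term w e r' k = c * (1 / (x ^ e * (x + real r')))" for e r'
    by (simp add: alt_term_def x_def c_def)
  have "alt_term w (i - 1) 0 k = c / x ^ i" if "i \<in> {1..m}" for i
    using that by (simp add: expand power_eq_if[of _ i])
  then have "(\<Sum>i=1..m. (-1) ^ (m - i) / real r ^ (m - i + 1) * alt_term w (i - 1) 0 k)
      = c * (\<Sum>i=1..m. (-1) ^ (m - i) / real r ^ (m - i + 1) / x ^ i)"
    by (simp add: sum_distrib_left mult.commute)
  moreover have "alt_term w m r k = c * ((\<Sum>i=1..m. (-1) ^ (m - i) / real r ^ (m - i + 1) / x ^ i)
      + (-1) ^ m / real r ^ m / (x + real r))"
    unfolding expand using inverse_power_mult_partial_fractions[OF x(1) _ x(2)] assms by simp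
  ultimately show ?thesis
    by (simp add: expand distrib_left)
qed

section \<open>Convergence by Leibniz's test\<close>

lemma summable_Leibniz_eventually:
  fixes a :: "nat \<Rightarrow> real"
  assumes "a \<longlonglongrightarrow> 0" and "\<forall>\<^sub>F k in sequentially. a (Suc k) \<le> a k"
  shows "summable (\<lambda>k. (-1) ^ k * a k)"
proof -
  obtain N where dec: "\<And>k. N \<le> k \<Longrightarrow> a (Suc k) \<le> a k"
    using assms(2) by (auto simp: eventually_sequentially)
  have "decseq (\<lambda>j. a (j + N))"
    by (intro decseq_SucI) (simp add: dec)
  moreover have "(\<lambda>j. a (j + N)) \<longlonglongrightarrow> 0"
    using assms(1) by (rule LIMSEQ_ignore_initial_segment)
  ultimately have "summable (\<lambda>j. (-1) ^ N * ((-1) ^ j * a (j + N)))"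
    by (intro summable_mult summable_Leibniz(1) decseq_imp_monoseq)
  then have "summable (\<lambda>j. (-1) ^ (j + N) * a (j + N))"
    by (simp add: power_add mult_ac)
  then show ?thesis
    by (subst summable_iff_shift[symmetric, of _ N])
qed

text \<open>Weights h1, h2 for which Leibniz's test applies to sum (-1)^n h1(n) h2(n) / (n^e (n + r)).\<close>
definition harmonic_like :: "(nat \<Rightarrow> real) \<Rightarrow> bool" where
  "harmonic_like h \<longleftrightarrow> (\<forall>n. 0 \<le> h n \<and> h n \<le> ln (real n + 1) + 1) \<and>
     (\<forall>K>0. \<forall>\<^sub>F n in sequentially. h (Suc n) \<le> (1 + 1 / (K * real n)) * h n)"

lemma harmonic_like_one: "harmonic_like (\<lambda>_. 1)"
  by (auto simp: harmonic_like_def intro: always_eventually)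

lemma harm_le_ln_plus_one: "harm n \<le> ln (real n + 1) + 1"
proof (cases "n = 0")
  case False
  then have "harm n - ln (real n) \<le> harm 1 - ln 1"
    using euler_mascheroni_sequence_decreasing[of 1 n] by simp
  moreover have "ln (real n) \<le> ln (real n + 1)"
    using False by simp
  ultimately show ?thesis
    by (simp add: harm_def)
qed (simp add: harm_def)

lemma genH_le_harm: "0 < p \<Longrightarrow> genH (int p) n \<le> harm n"
  unfolding genH_of_nat harm_def
proof (rule sum_mono)
  fix j assume "0 < p" "j \<in> {1..n}"
  then have "real j \<le> real j ^ p"
    by (simp add: self_le_power)
  with \<open>j \<in> {1..n}\<close> show "1 / real j ^ p \<le> inverse (real j)"
    by (simp add: divide_simps)
qed

lemma genH_ge_one: "0 < p \<Longrightarrow> 1 \<le> n \<Longrightarrow> 1 \<le> genH (int p) n"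
  unfolding genH_of_nat by (rule order.trans[OF _ member_le_sum[of 1]]) auto

lemma genH_eventually_ge:
  assumes "0 < p" "0 < K"
  shows "\<forall>\<^sub>F n in sequentially. K * real n \<le> real (Suc n) ^ p * genH (int p) n"
proof (cases "p = 1")
  case True
  have "\<forall>\<^sub>F n in sequentially. K \<le> harm n"
    using harm_at_top by (simp add: filterlim_at_top)
  then show ?thesis
  proof (rule eventually_mono)
    fix n assume "K \<le> harm n"
    then have "K * real n \<le> harm n * real (Suc n)"
      using harm_nonneg[where 'a = real, of n] by (intro mult_mono) auto
    also have "harm n = genH (int p) n"
      using True genH_of_nat[of 1 n] by (simp add: harm_def divide_inverse)
    finally show "K * real n \<le> real (Suc n) ^ p * genH (int p) n"
      using True by (simp add: mult.commute)
  qed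
next
  case False
  with assms have "2 \<le> p" by simp
  show ?thesis
    using eventually_ge_at_top[of "nat \<lceil>K\<rceil> + 1"]
  proof (rule eventually_mono)
    fix n assume "nat \<lceil>K\<rceil> + 1 \<le> n"
    then have "K \<le> real n" "1 \<le> n"
      by linarith+
    then have "K * real n \<le> real (Suc n) ^ 2"
      by (simp add: power2_eq_square mult_mono)
    also have "\<dots> \<le> real (Suc n) ^ p"
      using \<open>2 \<le> p\<close> by (intro power_increasing) auto
    also have "\<dots> \<le> real (Suc n) ^ p * genH (int p) n"
      using genH_ge_one[OF assms(1) \<open>1 \<le> n\<close>] by simp
    finally show "K * real n \<le> real (Suc n) ^ p * genH (int p) n" .
  qed
qed

lemma harmonic_like_genH:
  assumes "0 < p"
  shows "harmonic_like (genH (int p))"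
  unfolding harmonic_like_def
proof (intro conjI allI impI)
  fix n
  show "0 \<le> genH (int p) n"
    using assms by (simp add: genH_of_nat sum_nonneg)
  show "genH (int p) n \<le> ln (real n + 1) + 1"
    using genH_le_harm[OF assms] harm_le_ln_plus_one by (rule order.trans)
next
  fix K :: real assume "0 < K"
  show "\<forall>\<^sub>F n in sequentially.
      genH (int p) (Suc n) \<le> (1 + 1 / (K * real n)) * genH (int p) n"
    using genH_eventually_ge[OF assms \<open>0 < K\<close>] eventually_ge_at_top[of 1]
  proof eventually_elim
    case (elim n)
    with \<open>0 < K\<close> have "1 / real (Suc n) ^ p \<le> genH (int p) n / (K * real n)"
      by (simp add: divide_simps mult.commute del: of_nat_Suc)
    then show ?case
      by (simp add: genH_Suc[OF assms] algebra_simps)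
  qed
qed

lemma harmonic_like_mult_tendsto_zero:
  assumes "harmonic_like h1" "harmonic_like h2"
  shows "(\<lambda>n. h1 n * h2 n / (real n ^ e * (real n + real r))) \<longlonglongrightarrow> 0"
proof (rule real_tendsto_sandwich)
  have h: "0 \<le> h n" "h n \<le> ln (real n + 1) + 1" if "h \<in> {h1, h2}" for h n
    using assms that by (auto simp: harmonic_like_def)
  show "\<forall>\<^sub>F n in sequentially. 0 \<le> h1 n * h2 n / (real n ^ e * (real n + real r))"
    using h by (auto intro!: always_eventually)
  show "\<forall>\<^sub>F n in sequentially.
      h1 n * h2 n / (real n ^ e * (real n + real r)) \<le> (ln (real n + 1) + 1) ^ 2 / real n"
    using eventually_ge_at_top[of 1]
  proof eventually_elim
    case (elim n)
    have "h1 n * h2 n \<le> (ln (real n + 1) + 1) ^ 2"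
      unfolding power2_eq_square using h by (intro mult_mono) auto
    moreover have "real n \<le> real n ^ e * (real n + real r)"
      using elim by (intro order.trans[OF _ mult_mono[of 1 "real n ^ e" "real n"]]) auto
    ultimately show ?case
      using h elim by (intro frac_le) auto
  qed
  show "(\<lambda>n. (ln (real n + 1) + 1) ^ 2 / real n) \<longlonglongrightarrow> 0"
    by real_asymp
qed simp

lemma mult_le_one_plus_three_mult:
  fixes a b a' b' \<epsilon> :: real
  assumes "0 \<le> a" "0 \<le> b" "0 \<le> b'" "0 \<le> \<epsilon>" "\<epsilon> \<le> 1"
    and "a' \<le> (1 + \<epsilon>) * a" "b' \<le> (1 + \<epsilon>) * b"
  shows "a' * b' \<le> (1 + 3 * \<epsilon>) * (a * b)"
proof -
  have "a' * b' \<le> ((1 + \<epsilon>) * a) * ((1 + \<epsilon>) * b)"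
    using assms by (intro mult_mono) auto
  also have "\<dots> = (1 + \<epsilon>) ^ 2 * (a * b)"
    by (simp add: power2_eq_square)
  also have "\<dots> \<le> (1 + 3 * \<epsilon>) * (a * b)"
    using assms by (intro mult_right_mono) (auto simp: power2_eq_square algebra_simps mult_left_le_one_le)
  finally show ?thesis .
qed

lemma harmonic_like_mult_eventually_decreasing:
  assumes "harmonic_like h1" "harmonic_like h2"
  shows "\<forall>\<^sub>F n in sequentially. h1 (Suc n) * h2 (Suc n) / (real (Suc n) ^ e * (real (Suc n) + real r))
    \<le> h1 n * h2 n / (real n ^ e * (real n + real r))"
proof -
  define K where "K = 3 * (real r + 1)"
  have "0 < K" by (simp add: K_def)
  then have "\<forall>\<^sub>F n in sequentially. h1 (Suc n) \<le> (1 + 1 / (K * real n)) * h1 n"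
    and "\<forall>\<^sub>F n in sequentially. h2 (Suc n) \<le> (1 + 1 / (K * real n)) * h2 n"
    using assms by (auto simp: harmonic_like_def)
  then show ?thesis
    using eventually_ge_at_top[of 1]
  proof eventually_elim
    case (elim n)
    define \<epsilon> where "\<epsilon> = 1 / (K * real n)"
    have h: "0 \<le> h1 n" "0 \<le> h2 n" "0 \<le> h1 (Suc n)" "0 \<le> h2 (Suc n)"
      using assms by (auto simp: harmonic_like_def)
    have "1 \<le> K * real n"
      using elim(3) by (simp add: K_def mult_ge1_I)
    then have growth: "h1 (Suc n) * h2 (Suc n) \<le> (1 + 3 * \<epsilon>) * (h1 n * h2 n)"
      using elim h by (intro mult_le_one_plus_three_mult) (auto simp: \<epsilon>_def)
    have "real r * 1 \<le> real r * real n"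
      using elim(3) by (intro mult_left_mono) auto
    then have absorb: "(1 + 3 * \<epsilon>) * (real n + real r) \<le> real (Suc n) + real r"
      using elim(3) by (simp add: \<epsilon>_def K_def divide_simps algebra_simps)
    have "h1 (Suc n) * h2 (Suc n) * (real n + real r)
        \<le> ((1 + 3 * \<epsilon>) * (real n + real r)) * (h1 n * h2 n)"
      using mult_right_mono[OF growth, of "real n + real r"] by (simp add: mult_ac)
    also have "\<dots> \<le> (real (Suc n) + real r) * (h1 n * h2 n)"
      using absorb h by (intro mult_right_mono) auto
    finally have cross: "h1 (Suc n) * h2 (Suc n) * (real n + real r)
        \<le> (real (Suc n) + real r) * (h1 n * h2 n)" .
    have "h1 (Suc n) * h2 (Suc n) / (real (Suc n) ^ e * (real (Suc n) + real r))
        \<le> h1 (Suc n) * h2 (Suc n) / (real n ^ e * (real (Suc n) + real r))"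
      using h elim(3) by (intro divide_left_mono mult_right_mono power_mono mult_pos_pos) auto
    also have "\<dots> \<le> h1 n * h2 n / (real n ^ e * (real n + real r))"
      using cross elim(3) by (simp add: divide_simps mult_ac del: of_nat_Suc)
    finally show ?case .
  qed
qed

lemma summable_alt_term:
  assumes "harmonic_like h1" "harmonic_like h2"
  shows "summable (alt_term (\<lambda>n. h1 n * h2 n) e r)"
proof -
  let ?a = "\<lambda>n. h1 n * h2 n / (real n ^ e * (real n + real r))"
  have "alt_term (\<lambda>n. h1 n * h2 n) e r = (\<lambda>k. (-1) ^ k * ?a (Suc k))"
    by (simp add: fun_eq_iff alt_term_def)
  moreover have "summable (\<lambda>k. (-1) ^ k * ?a (Suc k))"
  proof (rule summable_Leibniz_eventually)
    show "(\<lambda>k. ?a (Suc k)) \<longlonglongrightarrow> 0"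
      using harmonic_like_mult_tendsto_zero[OF assms] by (rule LIMSEQ_Suc)
    have "\<forall>\<^sub>F n in sequentially. ?a (Suc n) \<le> ?a n"
      using harmonic_like_mult_eventually_decreasing[OF assms] .
    then show "\<forall>\<^sub>F k in sequentially. ?a (Suc (Suc k)) \<le> ?a (Suc k)"
      by (subst eventually_sequentially_Suc)
  qed
  ultimately show ?thesis
    by simp
qed

lemma summable_alt_term_one: "summable (alt_term (\<lambda>_. 1) e r)"
  using summable_alt_term[OF harmonic_like_one harmonic_like_one] by simp

lemma summable_alt_term_genH: "0 < p \<Longrightarrow> summable (alt_term (genH (int p)) e r)"
  using summable_alt_term[OF harmonic_like_genH harmonic_like_one] by simp

lemma summable_alt_term_genH_genH:
  "0 < p1 \<Longrightarrow> 0 < p2 \<Longrightarrow> summable (alt_term (\<lambda>n. genH (int p1) n * genH (int p2) n) e r)"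
  using summable_alt_term[OF harmonic_like_genH harmonic_like_genH] .

section \<open>Positive orders: reduction to r = 0\<close>

lemma T1_eq_partial_fractions:
  assumes "0 < p1" "0 < p2" "0 < r"
  shows "T1 (int p1) (int p2) m 1 r =
    (\<Sum>i=1..m. (-1) ^ (m - i) / real r ^ (m - i + 1) * Sppm p1 p2 i)
    + (-1) ^ m / real r ^ m * T1 (int p1) (int p2) 0 1 r"
proof -
  let ?W = "\<lambda>n. genH (int p1) n * genH (int p2) n"
  have "alt_term ?W (i - 1) 0 sums Sppm p1 p2 i" if "i \<in> {1..m}" for i
    using that Sppm_eq_suminf_alt_term[of p1 p2 "i - 1"] summable_alt_term_genH_genH[OF assms(1,2)]
    by (simp add: summable_sums)
  moreover have "alt_term ?W 0 r sums T1 (int p1) (int p2) 0 1 r"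
    unfolding T1_eq_suminf_alt_term using summable_alt_term_genH_genH[OF assms(1,2)] by (rule summable_sums)
  ultimately have "(\<lambda>k. (\<Sum>i=1..m. (-1) ^ (m - i) / real r ^ (m - i + 1) * alt_term ?W (i - 1) 0 k)
      + (-1) ^ m / real r ^ m * alt_term ?W 0 r k)
    sums ((\<Sum>i=1..m. (-1) ^ (m - i) / real r ^ (m - i + 1) * Sppm p1 p2 i)
      + (-1) ^ m / real r ^ m * T1 (int p1) (int p2) 0 1 r)"
    by (intro sums_add sums_sum sums_mult) auto
  then show ?thesis
    unfolding T1_eq_suminf_alt_term alt_term_partial_fractions[OF assms(3), symmetric]
    by (simp add: sums_iff)
qed

lemma alt_term_shift_sums:
  assumes "w 0 = 0" and "(\<lambda>k. (-1) ^ k * w k / (real (Suc k) + real r)) sums s"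
  shows "alt_term w 0 (Suc r) sums - s"
proof -
  have "(\<lambda>k. (-1) ^ Suc k * w (Suc k) / (real (Suc (Suc k)) + real r)) sums s"
    using assms by (subst sums_Suc_iff) simp
  also have "(\<lambda>k. (-1) ^ Suc k * w (Suc k) / (real (Suc (Suc k)) + real r)) =
      (\<lambda>k. - alt_term w 0 (Suc r) k)"
    by (simp add: fun_eq_iff alt_term_def)
  finally show ?thesis
    using sums_minus by fastforce
qed

lemma T1_zero_Suc:
  assumes "0 < p1" "0 < p2"
  shows "T1 (int p1) (int p2) 0 1 (Suc r) =
    S1 (int p1) p2 1 r + S1 (int p2) p1 1 r - S1 0 (p1 + p2 + 1) 1 r - T1 (int p1) (int p2) 0 1 r"
proof -
  let ?W = "\<lambda>n. genH (int p1) n * genH (int p2) n"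
  \<comment> \<open>H_{n-1} = H_n - n^(-p) turns the shifted series back into series with denominator n + r\<close>
  have "(-1) ^ k * ?W k / (real (Suc k) + real r) = alt_term ?W 0 r k
      - alt_term (genH (int p1)) p2 r k - alt_term (genH (int p2)) p1 r k
      + alt_term (\<lambda>_. 1) (p1 + p2) r k" for k
  proof -
    define x where "x = real (Suc k)"
    have "x \<noteq> 0" "x + real r \<noteq> 0"
      by (simp_all add: x_def)
    have H: "genH (int p1) k = genH (int p1) (Suc k) - 1 / x ^ p1"
      "genH (int p2) k = genH (int p2) (Suc k) - 1 / x ^ p2"
      using genH_Suc[OF assms(1), of k] genH_Suc[OF assms(2), of k] by (simp_all add: x_def)
    have "s * ((A - 1 / x ^ p1) * (B - 1 / x ^ p2)) / d = s * (A * B) / (x ^ 0 * d)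
        - s * A / (x ^ p2 * d) - s * B / (x ^ p1 * d) + s * 1 / (x ^ (p1 + p2) * d)"
      if "d \<noteq> 0" for s A B d
      using that \<open>x \<noteq> 0\<close> by (simp add: field_simps power_add)
    then show ?thesis
      unfolding alt_term_def x_def[symmetric] H using \<open>x + real r \<noteq> 0\<close> .
  qed
  moreover have "(\<lambda>k. alt_term ?W 0 r k - alt_term (genH (int p1)) p2 r k
      - alt_term (genH (int p2)) p1 r k + alt_term (\<lambda>_. 1) (p1 + p2) r k)
    sums (T1 (int p1) (int p2) 0 1 r - S1 (int p1) p2 1 r - S1 (int p2) p1 1 r + S1 0 (p1 + p2 + 1) 1 r)"
    unfolding S1_zero_eq_suminf_alt_term[of "p1 + p2", unfolded Suc_eq_plus1]
    unfolding T1_eq_suminf_alt_term S1_eq_suminf_alt_term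
    using assms by (intro sums_add sums_diff summable_sums summable_alt_term_genH_genH
        summable_alt_term_genH summable_alt_term_one)
  ultimately have "alt_term ?W 0 (Suc r) sums
      - (T1 (int p1) (int p2) 0 1 r - S1 (int p1) p2 1 r - S1 (int p2) p1 1 r + S1 0 (p1 + p2 + 1) 1 r)"
    using assms by (intro alt_term_shift_sums) (simp_all add: genH_of_nat)
  then show ?thesis
    unfolding T1_eq_suminf_alt_term[of _ _ 0 "Suc r"] by (simp add: sums_iff)
qed

lemma alternating_recurrence:
  fixes a d :: "nat \<Rightarrow> 'a :: comm_ring_1"
  assumes "\<And>j. a (Suc j) = d j - a j"
  shows "a (Suc r) = (-1) ^ r * (d 0 - a 0) + (\<Sum>j=1..r. (-1) ^ (r - j) * d j)"
proof (induction r)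
  case (Suc r)
  have "(\<Sum>j=1..r. (-1) ^ (Suc r - j) * d j) = - (\<Sum>j=1..r. (-1) ^ (r - j) * d j)"
    by (simp add: Suc_diff_le flip: sum_negf)
  with Suc.IH show ?case
    by (simp add: assms[of "Suc r"])
qed (simp add: assms)

lemma T1_zero_eq:
  assumes "0 < p1" "0 < p2" "0 < r"
  shows "T1 (int p1) (int p2) 0 1 r = (-1) ^ (r - 1) *
      (Spm p1 (p2 + 1) + Spm p2 (p1 + 1) - zeta_bar (p1 + p2 + 1) - Sppm p1 p2 1)
    + (\<Sum>j=1..r-1. (-1) ^ (r - 1 - j) *
      (S1 (int p1) p2 1 j + S1 (int p2) p1 1 j - S1 0 (p1 + p2 + 1) 1 j))"
proof -
  obtain r' where r: "r = Suc r'"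
    using assms(3) gr0_implies_Suc by blast
  have "T1 (int p1) (int p2) 0 1 0 = Sppm p1 p2 1"
    using T1_eq_suminf_alt_term Sppm_eq_suminf_alt_term[of p1 p2 0] by simp
  moreover have "S1 (int p) q 1 0 = Spm p (q + 1)" for p q
    using S1_eq_suminf_alt_term Spm_eq_suminf_alt_term by simp
  moreover have "S1 0 (p1 + p2 + 1) 1 0 = zeta_bar (p1 + p2 + 1)"
    using S1_zero_eq_suminf_alt_term zeta_bar_eq_suminf_alt_term by simp
  ultimately show ?thesis
    unfolding r
    using alternating_recurrence[where a = "T1 (int p1) (int p2) 0 1", OF T1_zero_Suc[OF assms(1,2)]]
    by simp
qed

lemma T1_pos_pos:
  assumes "0 < p1" "0 < p2" "0 < r"
  shows "T1 (int p1) (int p2) m 1 r =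
       (\<Sum>i=1..m. (-1) ^ (m - i) / real r ^ (m - i + 1) * Sppm p1 p2 i)
     + (-1) ^ (m + r) / real r ^ m * (Sppm p1 p2 1 - Spm p1 (p2 + 1) - Spm p2 (p1 + 1))
     + (-1) ^ (m + r) / real r ^ m * zeta_bar (p1 + p2 + 1)
     + (\<Sum>j=1..r-1. (-1) ^ (r + m - j) / real r ^ m * S1 0 (p1 + p2 + 1) 1 j)
     + (\<Sum>j=1..r-1. (-1) ^ (r + m - 1 - j) / real r ^ m
          * (S1 (int p1) p2 1 j + S1 (int p2) p1 1 j))"
proof -
  define C :: real where "C = (-1) ^ m / real r ^ m"
  have sign: "(-1) ^ m * (-1) ^ (r - 1 - j) = ((-1) ^ (r + m - 1 - j) :: real)"
    "(-1) ^ (r + m - j) = - ((-1) ^ (r + m - 1 - j) :: real)" if "j \<in> {1..r-1}" for j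
  proof -
    from that have e: "r + m - 1 - j = m + (r - 1 - j)" "r + m - j = Suc (r + m - 1 - j)"
      by auto
    show "(-1) ^ m * (-1) ^ (r - 1 - j) = ((-1) ^ (r + m - 1 - j) :: real)"
      by (simp only: e(1) power_add)
    show "(-1) ^ (r + m - j) = - ((-1) ^ (r + m - 1 - j) :: real)"
      by (simp only: e(2) power_Suc)
  qed
  have sums_part: "C * (\<Sum>j=1..r-1. (-1) ^ (r - 1 - j) *
      (S1 (int p1) p2 1 j + S1 (int p2) p1 1 j - S1 0 (p1 + p2 + 1) 1 j))
    = (\<Sum>j=1..r-1. (-1) ^ (r + m - j) / real r ^ m * S1 0 (p1 + p2 + 1) 1 j)
     + (\<Sum>j=1..r-1. (-1) ^ (r + m - 1 - j) / real r ^ m * (S1 (int p1) p2 1 j + S1 (int p2) p1 1 j))"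
    unfolding sum_distrib_left sum.distrib[symmetric]
  proof (intro sum.cong refl)
    fix j assume j: "j \<in> {1..r-1}"
    let ?S = "S1 (int p1) p2 1 j + S1 (int p2) p1 1 j" and ?Z = "S1 0 (p1 + p2 + 1) 1 j"
    have "C * ((-1) ^ (r - 1 - j) * (?S - ?Z)) = ((-1) ^ m * (-1) ^ (r - 1 - j)) / real r ^ m * (?S - ?Z)"
      by (simp add: C_def)
    also have "\<dots> = (-1) ^ (r + m - j) / real r ^ m * ?Z + (-1) ^ (r + m - 1 - j) / real r ^ m * ?S"
      unfolding sign[OF j] by (simp add: algebra_simps)
    finally show "C * ((-1) ^ (r - 1 - j) * (?S - ?Z)) =
        (-1) ^ (r + m - j) / real r ^ m * ?Z + (-1) ^ (r + m - 1 - j) / real r ^ m * ?S" .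
  qed
  have sign_part: "C * ((-1) ^ (r - 1) * E) = (-1) ^ (m + r) / real r ^ m * (- E)" for E
  proof -
    obtain r' where "r = Suc r'"
      using assms(3) gr0_implies_Suc by blast
    then show ?thesis
      by (simp add: C_def power_add)
  qed
  show ?thesis
    unfolding T1_eq_partial_fractions[OF assms, of m] T1_zero_eq[OF assms] C_def[symmetric]
      distrib_left sign_part sums_part
    by (simp add: algebra_simps add_divide_distrib)
qed

section \<open>Negative orders\<close>

lemma genH_uminus_bernoulli_plus:
  "genH (- int p) n = (\<Sum>l=0..p. (real ((p + 1) choose l) * bernoulli_plus l / real (p + 1))
      * real n ^ (p + 1 - l))"
  unfolding genH_uminus sum_powers_bernoulli_plus sum_distrib_left by (simp add: field_simps)

lemma alt_term_mult_genH_uminus_sums: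
  assumes "p + 1 \<le> e" and "\<And>l. l \<le> p \<Longrightarrow> alt_term w (e - p - 1 + l) r sums s l"
  shows "alt_term (\<lambda>n. w n * genH (- int p) n) e r sums
    (1 / real (p + 1) * (\<Sum>l=0..p. real ((p + 1) choose l) * bernoulli_plus l * s l))"
proof -
  define c where "c l = real ((p + 1) choose l) * bernoulli_plus l / real (p + 1)" for l
  have "alt_term (\<lambda>n. w n * genH (- int p) n) e r =
      (\<lambda>k. \<Sum>l=0..p. c l * alt_term (\<lambda>n. w n * real n ^ (p + 1 - l)) e r k)"
    unfolding genH_uminus_bernoulli_plus c_def[symmetric] sum_distrib_left
    by (simp add: alt_term_sum[symmetric] mult_ac)
  also have "\<dots> = (\<lambda>k. \<Sum>l=0..p. c l * alt_term w (e - p - 1 + l) r k)"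
  proof (intro ext sum.cong refl)
    fix k l assume "l \<in> {0..p}"
    with assms(1) have "p + 1 - l \<le> e" "e - (p + 1 - l) = e - p - 1 + l"
      by auto
    then show "c l * alt_term (\<lambda>n. w n * real n ^ (p + 1 - l)) e r k = c l * alt_term w (e - p - 1 + l) r k"
      by (metis alt_term_mult_power)
  qed
  also have "\<dots> sums (\<Sum>l=0..p. c l * s l)"
    using assms(2) by (intro sums_sum sums_mult) auto
  also have "(\<Sum>l=0..p. c l * s l) =
      1 / real (p + 1) * (\<Sum>l=0..p. real ((p + 1) choose l) * bernoulli_plus l * s l)"
    by (simp add: c_def sum_distrib_left)
  finally show ?thesis .
qed

lemma T1_pos_neg:
  assumes "0 < p1" "p2 + 1 \<le> m"
  shows "T1 (int p1) (- int p2) m 1 r =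
    1 / real (p2 + 1) * (\<Sum>l=0..p2. real ((p2 + 1) choose l) * bernoulli_plus l
      * S1 (int p1) (m - p2 - 1 + l) 1 r)"
proof -
  have "alt_term (genH (int p1)) e r sums S1 (int p1) e 1 r" for e
    unfolding S1_eq_suminf_alt_term using summable_alt_term_genH[OF assms(1)] by (rule summable_sums)
  then have "alt_term (\<lambda>n. genH (int p1) n * genH (- int p2) n) m r sums
      (1 / real (p2 + 1) * (\<Sum>l=0..p2. real ((p2 + 1) choose l) * bernoulli_plus l
        * S1 (int p1) (m - p2 - 1 + l) 1 r))"
    using assms(2) by (intro alt_term_mult_genH_uminus_sums) auto
  then show ?thesis
    unfolding T1_eq_suminf_alt_term by (rule sums_unique[symmetric])
qed

lemma T1_neg_neg:
  assumes "p1 + p2 + 2 \<le> m"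
  shows "T1 (- int p1) (- int p2) m 1 r =
    1 / (real (p1 + 1) * real (p2 + 1)) *
      (\<Sum>l1=0..p1. \<Sum>l2=0..p2. real ((p1 + 1) choose l1) * real ((p2 + 1) choose l2)
        * bernoulli_plus l1 * bernoulli_plus l2 * S1 0 (m - p1 - p2 - 1 + l1 + l2) 1 r)"
proof -
  let ?c = "\<lambda>p l. real ((p + 1) choose l) * bernoulli_plus l"
  have one: "alt_term (\<lambda>_. 1) e r sums S1 0 (Suc e) 1 r" for e
    unfolding S1_zero_eq_suminf_alt_term using summable_alt_term_one by (rule summable_sums)
  have "alt_term (genH (- int p1)) (m - p2 - 1 + l2) r sums
      (1 / real (p1 + 1) * (\<Sum>l1=0..p1. ?c p1 l1 * S1 0 (m - p1 - p2 - 1 + l1 + l2) 1 r))"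
    if "l2 \<le> p2" for l2
  proof -
    have s: "alt_term (\<lambda>n. 1 * genH (- int p1) n) (m - p2 - 1 + l2) r sums (1 / real (p1 + 1) *
        (\<Sum>l1=0..p1. ?c p1 l1 * S1 0 (Suc (m - p2 - 1 + l2 - p1 - 1 + l1)) 1 r))"
      using assms by (intro alt_term_mult_genH_uminus_sums one) auto
    have "Suc (m - p2 - 1 + l2 - p1 - 1 + l1) = m - p1 - p2 - 1 + l1 + l2" for l1
      using assms by simp
    then show ?thesis
      using s by (simp only: mult_1)
  qed
  then have "alt_term (\<lambda>n. genH (- int p1) n * genH (- int p2) n) m r sums
      (1 / real (p2 + 1) * (\<Sum>l2=0..p2. ?c p2 l2 *
        (1 / real (p1 + 1) * (\<Sum>l1=0..p1. ?c p1 l1 * S1 0 (m - p1 - p2 - 1 + l1 + l2) 1 r))))"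
    using assms by (intro alt_term_mult_genH_uminus_sums) auto
  also have "1 / real (p2 + 1) * (\<Sum>l2=0..p2. ?c p2 l2 *
        (1 / real (p1 + 1) * (\<Sum>l1=0..p1. ?c p1 l1 * S1 0 (m - p1 - p2 - 1 + l1 + l2) 1 r)))
    = 1 / (real (p1 + 1) * real (p2 + 1)) *
      (\<Sum>l1=0..p1. \<Sum>l2=0..p2. real ((p1 + 1) choose l1) * real ((p2 + 1) choose l2)
        * bernoulli_plus l1 * bernoulli_plus l2 * S1 0 (m - p1 - p2 - 1 + l1 + l2) 1 r)"
    by (subst sum.swap) (simp add: sum_distrib_left mult_ac)
  finally show ?thesis
    unfolding T1_eq_suminf_alt_term by (rule sums_unique[symmetric])
qed

theorem lemma10:
  shows
  "(\<forall>p1 p2 r m. p1 \<ge> 1 \<longrightarrow> p2 \<ge> 1 \<longrightarrow> r \<ge> 1 \<longrightarrow>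
     T1 (int p1) (int p2) m 1 r =
       (\<Sum>i=1..m. (-1) ^ (m - i) / real r ^ (m - i + 1) * Sppm p1 p2 i)
     + (-1) ^ (m + r) / real r ^ m * (Sppm p1 p2 1 - Spm p1 (p2 + 1) - Spm p2 (p1 + 1))
     + (-1) ^ (m + r) / real r ^ m * zeta_bar (p1 + p2 + 1)
     + (\<Sum>j=1..r-1. (-1) ^ (r + m - j) / real r ^ m * S1 0 (p1 + p2 + 1) 1 j)
     + (\<Sum>j=1..r-1. (-1) ^ (r + m - 1 - j) / real r ^ m
          * (S1 (int p1) p2 1 j + S1 (int p2) p1 1 j)))
  \<and>
  (\<forall>p1 p2 m r. p1 \<ge> 1 \<longrightarrow> m \<ge> 1 \<longrightarrow> r \<ge> 1 \<longrightarrow> m \<ge> p2 + 1 \<longrightarrow>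
     T1 (int p1) (- int p2) m 1 r =
       1 / real (p2 + 1) * (\<Sum>l=0..p2. real ((p2 + 1) choose l) * bernoulli_plus l
          * S1 (int p1) (m - p2 - 1 + l) 1 r))
  \<and>
  (\<forall>p1 p2 m r. m \<ge> 1 \<longrightarrow> r \<ge> 1 \<longrightarrow> m \<ge> p1 + p2 + 2 \<longrightarrow>
     T1 (- int p1) (- int p2) m 1 r =
       1 / (real (p1 + 1) * real (p2 + 1)) *
         (\<Sum>l1=0..p1. \<Sum>l2=0..p2. real ((p1 + 1) choose l1) * real ((p2 + 1) choose l2)
            * bernoulli_plus l1 * bernoulli_plus l2
            * S1 0 (m - p1 - p2 - 1 + l1 + l2) 1 r))"
  by (intro conjI allI impI T1_pos_pos T1_pos_neg T1_neg_neg) auto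

end
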